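(* Let $k,n\in\mathbb N$, $\xi=(\xi_1,\dots,\xi_k)\in\mathcal P_0^k$ with $\xi_1=z$, and $\gamma=\gamma(\xi)$. Then for every $\lambda\in(\gamma\mathbb D)^n$ and $1\le j\le n$, the formula $\phi_{\lambda,j}(a)=\sum_{m=0}^\infty P_{n,j,m}(\lambda)\alpha_m(a,\xi)$ defines a continuous linear functional $\phi_{\lambda,j}$ on $\mathcal A^{[k]}$. Moreover, $\phi_{\lambda,j}(u_1^{r-1})=\delta_{j,r}$ for $1\le j,r\le n$, and $I_{\xi,q_\lambda}=\bigcap_{j=1}^n\ker\phi_{\lambda,j}$, where $q_\lambda(z)=\prod_{j=1}^n(z-\lambda_j)$. Furthermore, for each $1\le j\le n$ the map $\lambda\mapsto\phi_{\lambda,j}$ from $(\gamma\mathbb D)^n$ to $(\mathcal A^{[k]})^*$ is norm continuous.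
   Context: $\mathbb D$ is the open unit disk, $\mathcal P_0=\{p\in\mathbb C[z]:p(0)=0\}$, $\mathbb Z_+=\{0,1,\dots\}$. $\mathcal A^{[k]}$ is the Banach algebra of power series $a=\sum_{n\in\mathbb Z_+^k}a_nu_1^{n_1}\cdots u_k^{n_k}$ with $\|a\|_{[k]}=\sum|a_n|<\infty$ (functions continuous on the closed polydisk, holomorphic on $\mathbb D^k$). For $\xi\in\mathcal P_0^k$, $\gamma(\xi)=\sup\{c>0:\xi_j(c\mathbb D)\subseteq\mathbb D,\ 1\le j\le k\}$, $\Phi_\xi(a)(z)=a(\xi_1(z),\dots,\xi_k(z))$ is holomorphic on $\gamma(\xi)\mathbb D$, and $\alpha_m(a,\xi)$ denotes its $m$-th Taylor coefficient at $0$: $\Phi_\xi(a)(z)=\sum_{m\ge0}\alpha_m(a,\xi)z^m$. For a nonzero polynomial $q$ with zeros in $\gamma(\xi)\mathbb D$, $I_{\xi,q}=\{a\in\mathcal A^{[k]}:\text{every zero of }q\text{ of order }i\text{ is a zero of }\Phi_\xi(a)\text{ of order}\ge i\}$. For $\lambda\in\mathbb C^n$, $M_n(\lambda)=(\lambda_j^{r-1})_{j,r=1}^n$ is the Vandermonde matrix, $M_{n,j,m}(\lambda)$ is $M_n(\lambda)$ with its $j$-th column replaced by $(\lambda_1^m,\dots,\lambda_n^m)^T$, and $P_{n,j,m}$ is the polynomial $\det M_{n,j,m}(\lambda)/\det M_n(\lambda)\in\mathbb C[\lambda_1,\dots,\lambda_n]$ (the division is exact). $\delta_{j,r}$ is the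 Kronecker delta. *)

theory Defs
  imports "HOL-Complex_Analysis.Complex_Analysis" "HOL-Computational_Algebra.Polynomial"
begin

text \<open>Multi-indices in Z_+^k, variables indexed 1..k (coordinates outside 1..k are 0).\<close>
definition MI :: "nat \<Rightarrow> (nat \<Rightarrow> nat) set" where
  "MI k = {n. \<forall>i. i \<notin> {1..k} \<longrightarrow> n i = 0}"

text \<open>The Banach algebra A^[k]: absolutely summable coefficient families.\<close>
definition Alg :: "nat \<Rightarrow> ((nat \<Rightarrow> nat) \<Rightarrow> complex) set" where
  "Alg k = {a. (\<forall>n. n \<notin> MI k \<longrightarrow> a n = 0) \<and> (\<lambda>n. norm (a n)) summable_on MI k}"

definition normA :: "nat \<Rightarrow> ((nat \<Rightarrow> nat) \<Rightarrow> complex) \<Rightarrow> real" where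
  "normA k a = (\<Sum>\<^sub>\<infinity>n\<in>MI k. norm (a n))"

definition dnorm :: "nat \<Rightarrow> (((nat \<Rightarrow> nat) \<Rightarrow> complex) \<Rightarrow> complex) \<Rightarrow> real" where
  "dnorm k f = Sup {norm (f a) | a. a \<in> Alg k \<and> normA k a \<le> 1}"

definition u1pow :: "nat \<Rightarrow> (nat \<Rightarrow> nat) \<Rightarrow> complex" where
  "u1pow r = (\<lambda>n. if n = (\<lambda>i. if i = 1 then r else 0) then 1 else 0)"

definition P0 :: "complex poly set" where
  "P0 = {p. poly p 0 = 0}"

definition gam :: "nat \<Rightarrow> (nat \<Rightarrow> complex poly) \<Rightarrow> real" where
  "gam k xi = Sup {c. c > 0 \<and> (\<forall>j\<in>{1..k}. poly (xi j) ` ball 0 c \<subseteq> ball 0 1)}"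

definition Phi :: "nat \<Rightarrow> (nat \<Rightarrow> complex poly) \<Rightarrow> ((nat \<Rightarrow> nat) \<Rightarrow> complex) \<Rightarrow> complex \<Rightarrow> complex" where
  "Phi k xi a z = (\<Sum>\<^sub>\<infinity>n\<in>MI k. a n * (\<Prod>i\<in>{1..k}. poly (xi i) z ^ n i))"

definition alpha :: "nat \<Rightarrow> (nat \<Rightarrow> complex poly) \<Rightarrow> ((nat \<Rightarrow> nat) \<Rightarrow> complex) \<Rightarrow> nat \<Rightarrow> complex" where
  "alpha k xi a m = (deriv ^^ m) (Phi k xi a) 0 / fact m"

definition det_n :: "nat \<Rightarrow> (nat \<Rightarrow> nat \<Rightarrow> complex) \<Rightarrow> complex" where
  "det_n n M = (\<Sum>p | p permutes {1..n}. of_int (sign p) * (\<Prod>i\<in>{1..n}. M i (p i)))"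

definition Vmat :: "(nat \<Rightarrow> complex) \<Rightarrow> nat \<Rightarrow> nat \<Rightarrow> complex" where
  "Vmat lam = (\<lambda>i r. lam i ^ (r - 1))"

definition Vmat_rep :: "nat \<Rightarrow> nat \<Rightarrow> (nat \<Rightarrow> complex) \<Rightarrow> nat \<Rightarrow> nat \<Rightarrow> complex" where
  "Vmat_rep j m lam = (\<lambda>i r. if r = j then lam i ^ m else lam i ^ (r - 1))"

text \<open>P_{n,j,m}: the polynomial det M_{n,j,m} / det M_n, characterised as the unique
  continuous function f with f * det M_n = det M_{n,j,m} everywhere.\<close>
definition Pnjm :: "nat \<Rightarrow> nat \<Rightarrow> nat \<Rightarrow> (nat \<Rightarrow> complex) \<Rightarrow> complex" where
  "Pnjm n j m = (THE f. continuous_on UNIV f \<and>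
      (\<forall>lam. f lam * det_n n (Vmat lam) = det_n n (Vmat_rep j m lam)))"

definition phi :: "nat \<Rightarrow> (nat \<Rightarrow> complex poly) \<Rightarrow> nat \<Rightarrow> nat \<Rightarrow> (nat \<Rightarrow> complex)
                     \<Rightarrow> ((nat \<Rightarrow> nat) \<Rightarrow> complex) \<Rightarrow> complex" where
  "phi k xi n j lam a = (\<Sum>m. Pnjm n j m lam * alpha k xi a m)"

definition q_lam :: "nat \<Rightarrow> (nat \<Rightarrow> complex) \<Rightarrow> complex poly" where
  "q_lam n lam = (\<Prod>j\<in>{1..n}. [:- lam j, 1:])"

definition Iideal :: "nat \<Rightarrow> (nat \<Rightarrow> complex poly) \<Rightarrow> complex poly \<Rightarrow> ((nat \<Rightarrow> nat) \<Rightarrow> complex) set" where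
  "Iideal k xi q = {a \<in> Alg k. \<forall>w. poly q w = 0 \<longrightarrow>
      (\<forall>l < order w q. (deriv ^^ l) (Phi k xi a) w = 0)}"

end

theory Submission
  imports Defs "Jordan_Normal_Form.Determinant"
begin

(*
  Let r_m be the remainder of z^m modulo q_lam; it has degree < n and interpolates z^m at the
  roots lam_i, so by Cramer's rule for the Vandermonde system its coefficients are the
  P_{n,j,m}(lam), and they are O(s^m) for every s exceeding the moduli of the roots.  Cauchy's
  inequality gives alpha_m(a) = O(|a| rho^-m) for every rho < gam, hence the series defining
  phi_j converge geometrically and each phi_j is a bounded linear functional.

  Summing over j, the polynomial R_a(z) = sum_j phi_j(a) z^(j-1) equals sum_m alpha_m(a) r_m(z),
  so Phi_xi(a) - R_a = sum_m alpha_m(a) (z^m - r_m) is a locally uniform limit of multiples of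
  q_lam.  Therefore Phi_xi(a) and R_a have the same derivatives at every root below its
  multiplicity, and a lies in the ideal iff q_lam divides R_a, i.e. iff R_a = 0.  Continuity in
  lam follows from Tannery's theorem, all terms having a common geometric majorant near lam0.
*)

lemma degree_less_if_coeff_eq_0:
  assumes "\<forall>i\<ge>n. coeff p i = 0" "p \<noteq> 0"
  shows "degree p < n"
  using assms leading_coeff_0_iff not_le by blast

lemma poly_eq_sum_lessThan:
  fixes p :: "'a::{comm_semiring_0,semiring_1} poly"
  assumes "\<forall>i\<ge>n. coeff p i = 0"
  shows "poly p x = (\<Sum>i<n. coeff p i * x ^ i)"
proof (cases "p = 0")
  case False
  then have "degree p < n" using assms by (rule degree_less_if_coeff_eq_0[rotated])
  have "poly p x = (\<Sum>i\<le>degree p. coeff p i * x ^ i)" by (rule poly_altdef)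
  also have "\<dots> = (\<Sum>i<n. coeff p i * x ^ i)"
    by (rule sum.mono_neutral_left) (use \<open>degree p < n\<close> assms in \<open>auto intro: le_degree\<close>)
  finally show ?thesis .
qed simp

lemma norm_poly_le_of_coeff_bound:
  fixes p :: "complex poly"
  assumes "\<forall>i\<ge>n. coeff p i = 0" "norm z \<le> 1" "\<And>i. norm (coeff p i) \<le> B"
  shows "norm (poly p z) \<le> real n * B"
proof -
  have "norm (poly p z) \<le> (\<Sum>i<n. norm (coeff p i * z ^ i))"
    unfolding poly_eq_sum_lessThan[OF assms(1)] by (rule norm_sum)
  also have "\<dots> \<le> (\<Sum>i<n. B)"
  proof (intro sum_mono)
    fix i
    have "norm (coeff p i) * norm z ^ i \<le> norm (coeff p i)"
      using assms(2) by (intro mult_left_le power_le_one) auto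
    then show "norm (coeff p i * z ^ i) \<le> B"
      using assms(3)[of i] by (simp add: norm_mult norm_power)
  qed
  finally show ?thesis by simp
qed

lemma higher_deriv_poly: "(deriv ^^ l) (poly p) = poly ((pderiv ^^ l) p)"
  for p :: "complex poly"
proof (induction l)
  case (Suc l)
  have "deriv (poly q) = poly (pderiv q)" for q :: "complex poly"
    by (rule ext, rule DERIV_imp_deriv, rule poly_DERIV)
  then show ?case using Suc by simp
qed simp

lemma higher_deriv_power_at_0:
  "(deriv ^^ m) (\<lambda>z::complex. z ^ s) 0 / fact m = (if m = s then 1 else 0)"
proof -
  have "(deriv ^^ m) (\<lambda>z::complex. (z - 0) ^ s) 0 = pochhammer (of_nat (Suc s - m)) m * (0 - 0) ^ (s - m)"
    by (rule higher_deriv_power)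
  then have d: "(deriv ^^ m) (\<lambda>z::complex. z ^ s) 0 = pochhammer (of_nat (Suc s - m)) m * 0 ^ (s - m)"
    by simp
  consider "m = s" | "m < s" | "s < m" by linarith
  then show ?thesis
    by cases (use d in \<open>auto simp: pochhammer_fact[symmetric] pochhammer_0_left\<close>)
qed

lemma higher_pderiv_vanish_if_order:
  fixes p :: "complex poly"
  shows "d \<le> order w p \<Longrightarrow> l < d \<Longrightarrow> poly ((pderiv ^^ l) p) w = 0"
proof (induction l arbitrary: p d)
  case 0
  then show ?case using order_root[of p w] by auto
next
  case (Suc l)
  show ?case
  proof (cases "p = 0")
    case False
    have "poly p w = 0" using Suc.prems order_root[of p w] by auto
    then have d: "order w p = Suc (order w (pderiv p))" using order_pderiv[OF False] by blast
    have "poly ((pderiv ^^ l) (pderiv p)) w = 0"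
      by (rule Suc.IH[of "d - 1"]) (use Suc.prems d in auto)
    then show ?thesis by (simp add: funpow_Suc_right del: funpow.simps)
  qed simp
qed

lemma order_if_higher_pderiv_vanish:
  fixes p :: "complex poly"
  assumes "p \<noteq> 0" "\<forall>l<d. poly ((pderiv ^^ l) p) w = 0"
  shows "d \<le> order w p"
  using assms
proof (induction d arbitrary: p)
  case (Suc d)
  have root: "poly p w = 0" using Suc.prems by auto
  show ?case
  proof (cases "pderiv p = 0")
    case True
    then obtain h where "p = [:h:]" using pderiv_iszero by blast
    then show ?thesis using root Suc.prems(1) by simp
  next
    case False
    have "\<forall>l<d. poly ((pderiv ^^ l) (pderiv p)) w = 0"
      using Suc.prems(2) by (auto simp: funpow_Suc_right simp del: funpow.simps)
    then have "d \<le> order w (pderiv p)" using Suc.IH[OF False] by blast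
    then show ?thesis using order_pderiv[OF Suc.prems(1) root] by simp
  qed
qed simp

lemma order_linear: "order w [:- l, 1:] = (if w = l then 1 else 0)"
  for w l :: complex
proof (cases "w = l")
  case True
  then show ?thesis using order_power_n_n[of w 1] by simp
qed (auto intro: order_0I)

lemma higher_deriv_uniform_limit_of_polys:
  fixes p :: "nat \<Rightarrow> complex poly"
  assumes "uniform_limit A (\<lambda>N. poly (p N)) g sequentially" "open A" "w \<in> A"
    and "\<And>N. poly ((pderiv ^^ l) (p N)) w = 0"
  shows "(deriv ^^ l) g w = 0"
proof -
  have "((\<lambda>N. (deriv ^^ l) (poly (p N)) w) \<longlongrightarrow> (deriv ^^ l) g w) sequentially"
    using poly_holomorphic_on[OF holomorphic_on_ident, of _ A]
    by (intro higher_deriv_complex_uniform_limit[OF assms(1)] always_eventually allI) (use assms(2,3) in auto)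
  then show ?thesis
    using assms(4) by (simp add: higher_deriv_poly LIMSEQ_const_iff)
qed

section \<open>The polynomial \<open>q_lam\<close> and the remainders of \<open>z\<^sup>m\<close> modulo it\<close>

lemma q_lam_Suc: "q_lam (Suc n) lam = q_lam n lam * [:- lam (Suc n), 1:]"
  unfolding q_lam_def by (simp add: atLeastAtMostSuc_conv mult.commute)

lemma q_lam_0 [simp]: "q_lam 0 lam = 1"
  by (simp add: q_lam_def)

lemma q_lam_nonzero [simp]: "q_lam n lam \<noteq> 0"
  unfolding q_lam_def by (simp add: prod_zero_iff)

lemma degree_q_lam [simp]: "degree (q_lam n lam) = n"
  unfolding q_lam_def by (subst degree_prod_eq_sum_degree) auto

lemma coeff_q_lam_top [simp]: "coeff (q_lam n lam) n = 1"
proof -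
  have "lead_coeff (q_lam n lam) = 1"
    unfolding q_lam_def lead_coeff_prod by simp
  then show ?thesis by simp
qed

lemma poly_q_lam_eq_0_iff: "poly (q_lam n lam) w = 0 \<longleftrightarrow> (\<exists>i\<in>{1..n}. w = lam i)"
  unfolding q_lam_def poly_prod by (auto simp: prod_zero_iff)

lemma coeff_q_lam_Suc:
  "coeff (q_lam (Suc n) lam) i =
     - lam (Suc n) * coeff (q_lam n lam) i + (if i = 0 then 0 else coeff (q_lam n lam) (i - 1))"
  unfolding q_lam_Suc by (simp add: coeff_pCons')

lemma norm_coeff_q_lam_le:
  assumes "0 \<le> r" "\<forall>i\<in>{1..n}. norm (lam i) \<le> r"
  shows "norm (coeff (q_lam n lam) i) \<le> (1 + r) ^ n"
  using assms(2)
proof (induction n arbitrary: i)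
  case (Suc n)
  have IH: "norm (coeff (q_lam n lam) i) \<le> (1 + r) ^ n" for i using Suc by auto
  have "norm (coeff (q_lam (Suc n) lam) i)
      \<le> norm (lam (Suc n)) * norm (coeff (q_lam n lam) i) + (1 + r) ^ n"
    unfolding coeff_q_lam_Suc
    by (rule order.trans[OF norm_triangle_ineq]) (use IH assms(1) in \<open>auto simp: norm_mult\<close>)
  also have "\<dots> \<le> r * (1 + r) ^ n + (1 + r) ^ n"
    using Suc.prems IH[of i] assms(1) by (auto intro!: mult_mono)
  finally show ?case by (simp add: algebra_simps)
qed (simp add: coeff_1)

lemma tendsto_coeff_q_lam:
  assumes "\<forall>i\<in>{1..n}. ((\<lambda>x. g x i) \<longlongrightarrow> lam i) F"
  shows "((\<lambda>x. coeff (q_lam n (g x)) i) \<longlongrightarrow> coeff (q_lam n lam) i) F"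
  using assms
proof (induction n arbitrary: i)
  case (Suc n)
  then show ?case unfolding coeff_q_lam_Suc by (auto intro!: tendsto_intros)
qed simp

lemma q_lam_dvd_if_order_le:
  fixes p :: "complex poly"
  shows "(\<And>w. order w (q_lam n lam) \<le> order w p) \<Longrightarrow> p \<noteq> 0 \<Longrightarrow> q_lam n lam dvd p"
proof (induction n arbitrary: p)
  case (Suc n)
  let ?l = "lam (Suc n)"
  have ord_q: "order w (q_lam (Suc n) lam) = order w (q_lam n lam) + order w [:- ?l, 1:]" for w
    unfolding q_lam_Suc by (rule order_mult) (metis q_lam_Suc q_lam_nonzero)
  have "1 \<le> order ?l p" using Suc.prems(1)[of ?l] ord_q[of ?l] by (simp add: order_linear)
  then obtain p' where p': "p = [:- ?l, 1:] * p'"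
    using order_divides[of ?l 1 p] by (auto elim: dvdE)
  have "p' \<noteq> 0" using p' Suc.prems(2) by auto
  have ord_p: "order w p = order w [:- ?l, 1:] + order w p'" for w
    unfolding p' by (rule order_mult) (use p' Suc.prems(2) in simp)
  have "order w (q_lam n lam) \<le> order w p'" for w
    using Suc.prems(1)[of w] ord_q[of w] ord_p[of w] by simp
  then have "q_lam n lam dvd p'" using \<open>p' \<noteq> 0\<close> by (rule Suc.IH)
  then have "q_lam n lam * [:- ?l, 1:] dvd p' * [:- ?l, 1:]" by (rule mult_dvd_mono) simp
  then show ?case unfolding q_lam_Suc p' by (simp only: mult.commute)
qed simp

definition xpow_rem :: "nat \<Rightarrow> (nat \<Rightarrow> complex) \<Rightarrow> nat \<Rightarrow> complex poly" where
  "xpow_rem n lam m = monom 1 m mod q_lam n lam"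

lemma xpow_rem_0 [simp]: "xpow_rem 0 lam m = 0"
  by (simp add: xpow_rem_def)

lemma coeff_xpow_rem_eq_0:
  assumes "n \<le> i"
  shows "coeff (xpow_rem n lam m) i = 0"
proof (cases "xpow_rem n lam m = 0")
  case False
  then have "degree (xpow_rem n lam m) < n"
    using degree_mod_less'[OF q_lam_nonzero, of "monom 1 m" n lam] unfolding xpow_rem_def by simp
  then show ?thesis using assms by (simp add: coeff_eq_0)
qed simp

lemma q_lam_dvd_xpow_rem: "q_lam n lam dvd monom 1 m - xpow_rem n lam m"
  unfolding xpow_rem_def minus_mod_eq_mult_div by simp

lemma xpow_rem_unique:
  assumes "\<forall>i\<ge>n. coeff p i = 0" "q_lam n lam dvd monom 1 m - p"
  shows "xpow_rem n lam m = p"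
proof (rule ccontr)
  assume ne: "xpow_rem n lam m \<noteq> p"
  have "q_lam n lam dvd xpow_rem n lam m - p"
    using dvd_diff[OF assms(2) q_lam_dvd_xpow_rem[of n lam m]] by simp
  then have "n \<le> degree (xpow_rem n lam m - p)"
    using dvd_imp_degree_le[of "q_lam n lam"] ne by simp
  moreover have "degree (xpow_rem n lam m - p) < n"
    using assms(1) ne by (intro degree_less_if_coeff_eq_0) (auto simp: coeff_xpow_rem_eq_0)
  ultimately show False by simp
qed

lemma xpow_rem_small: "m < n \<Longrightarrow> xpow_rem n lam m = monom 1 m"
  by (rule xpow_rem_unique) (auto simp: coeff_monom)

lemma xpow_rem_Suc:
  assumes "0 < n"
  shows "xpow_rem n lam (Suc m) =
           pCons 0 (xpow_rem n lam m) - Polynomial.smult (coeff (xpow_rem n lam m) (n - 1)) (q_lam n lam)"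
    (is "_ = ?p")
proof (rule xpow_rem_unique)
  show "\<forall>i\<ge>n. coeff ?p i = 0"
  proof (intro allI impI)
    fix i assume "n \<le> i"
    then consider "i = n" | "n < i" by linarith
    then show "coeff ?p i = 0"
      by cases (use assms in \<open>auto simp: coeff_pCons' coeff_xpow_rem_eq_0 coeff_eq_0\<close>)
  qed
  have "monom 1 (Suc m) - ?p = [:0, 1:] * (monom 1 m - xpow_rem n lam m)
          + Polynomial.smult (coeff (xpow_rem n lam m) (n - 1)) (q_lam n lam)"
    by (simp add: monom_Suc)
  also have "q_lam n lam dvd \<dots>"
    by (intro dvd_add dvd_mult q_lam_dvd_xpow_rem Polynomial.dvd_smult dvd_refl)
  finally show "q_lam n lam dvd monom 1 (Suc m) - ?p" .
qed

lemma xpow_rem_Suc_degree: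
  "xpow_rem (Suc n) lam m = xpow_rem n lam m + Polynomial.smult (coeff (xpow_rem (Suc n) lam m) n) (q_lam n lam)"
proof -
  let ?c = "coeff (xpow_rem (Suc n) lam m) n"
  have "xpow_rem n lam m = xpow_rem (Suc n) lam m - Polynomial.smult ?c (q_lam n lam)"
  proof (rule xpow_rem_unique)
    show "\<forall>i\<ge>n. coeff (xpow_rem (Suc n) lam m - Polynomial.smult ?c (q_lam n lam)) i = 0"
    proof (intro allI impI)
      fix i assume "n \<le> i"
      then consider "i = n" | "n < i" by linarith
      then show "coeff (xpow_rem (Suc n) lam m - Polynomial.smult ?c (q_lam n lam)) i = 0"
        by cases (auto simp: coeff_xpow_rem_eq_0 coeff_eq_0)
    qed
    have "q_lam n lam dvd monom 1 m - xpow_rem (Suc n) lam m"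
      using q_lam_dvd_xpow_rem[of "Suc n" lam m] unfolding q_lam_Suc using dvd_mult_left by blast
    then have "q_lam n lam dvd (monom 1 m - xpow_rem (Suc n) lam m) + Polynomial.smult ?c (q_lam n lam)"
      by (intro dvd_add Polynomial.dvd_smult dvd_refl)
    then show "q_lam n lam dvd monom 1 m - (xpow_rem (Suc n) lam m - Polynomial.smult ?c (q_lam n lam))"
      by (simp add: diff_add_eq diff_diff_eq2)
  qed
  then show ?thesis by simp
qed

lemma coeff_xpow_rem_Suc:
  "0 < n \<Longrightarrow> coeff (xpow_rem n lam (Suc m)) i =
     (if i = 0 then 0 else coeff (xpow_rem n lam m) (i - 1))
       - coeff (xpow_rem n lam m) (n - 1) * coeff (q_lam n lam) i"
  by (subst xpow_rem_Suc) (auto simp: coeff_pCons')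

lemma top_coeff_xpow_rem_Suc:
  "coeff (xpow_rem (Suc n) lam (Suc m)) n =
     coeff (xpow_rem n lam m) (n - 1) + lam (Suc n) * coeff (xpow_rem (Suc n) lam m) n"
proof -
  let ?c = "coeff (xpow_rem (Suc n) lam m) n"
  have "coeff (xpow_rem (Suc n) lam (Suc m)) n =
          (if n = 0 then 0 else coeff (xpow_rem (Suc n) lam m) (n - 1)) - ?c * coeff (q_lam (Suc n) lam) n"
    by (simp add: coeff_xpow_rem_Suc)
  also have "(if n = 0 then 0 else coeff (xpow_rem (Suc n) lam m) (n - 1)) =
               coeff (xpow_rem n lam m) (n - 1) + ?c * (if n = 0 then 0 else coeff (q_lam n lam) (n - 1))"
    by (subst xpow_rem_Suc_degree) (simp add: coeff_xpow_rem_eq_0)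
  finally show ?thesis
    unfolding coeff_q_lam_Suc by (simp add: algebra_simps)
qed

lemma norm_recurrence_le:
  fixes x f :: "nat \<Rightarrow> complex"
  assumes rec: "\<And>m. x (Suc m) = f m + c * x m" and f: "\<And>m. norm (f m) \<le> K * s ^ m"
    and c: "norm c \<le> r" "0 \<le> r" "r \<le> s"
    and B: "norm (x 0) \<le> B" "K \<le> (s - r) * B"
  shows "norm (x m) \<le> B * s ^ m"
proof (induction m)
  case (Suc m)
  have "0 \<le> B" using B(1) norm_ge_zero order.trans by blast
  then have "norm (c * x m) \<le> r * (B * s ^ m)"
    unfolding norm_mult using Suc.IH c by (intro mult_mono) auto
  then have "norm (x (Suc m)) \<le> K * s ^ m + r * (B * s ^ m)"
    unfolding rec using f by (intro norm_triangle_le add_mono)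
  also have "\<dots> \<le> (s - r) * B * s ^ m + r * (B * s ^ m)"
    using B c \<open>0 \<le> B\<close> by (intro add_mono mult_right_mono) auto
  also have "\<dots> = B * s ^ Suc m" by (simp add: algebra_simps)
  finally show ?case .
qed (use B in simp)

lemma norm_coeff_xpow_rem_le:
  assumes "0 \<le> r" "r < s"
  obtains K where "K \<ge> 0"
    "\<And>lam m i. \<forall>i\<in>{1..n}. norm (lam i) \<le> r \<Longrightarrow> norm (coeff (xpow_rem n lam m) i) \<le> K * s ^ m"
proof (induction n arbitrary: thesis)
  case 0
  show ?case by (rule 0[of 0]) simp_all
next
  case (Suc n)
  obtain K where K: "K \<ge> 0"
    "\<And>lam m i. \<forall>i\<in>{1..n}. norm (lam i) \<le> r \<Longrightarrow> norm (coeff (xpow_rem n lam m) i) \<le> K * s ^ m"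
    using Suc.IH by blast
  define B where "B = max 1 (K / (s - r))"
  have "K / (s - r) \<le> B" by (simp add: B_def)
  then have "K \<le> (s - r) * B" using assms by (simp add: field_simps mult.commute)
  moreover have "1 \<le> B" by (simp add: B_def)
  ultimately have B: "1 \<le> B" "K \<le> (s - r) * B" by simp_all
  show ?case
  proof (rule Suc.prems)
    show "0 \<le> K + B * (1 + r) ^ n" using K(1) B assms(1) by simp
    fix lam :: "nat \<Rightarrow> complex" and m i assume lam: "\<forall>i\<in>{1..Suc n}. norm (lam i) \<le> r"
    then have lam_n: "\<forall>i\<in>{1..n}. norm (lam i) \<le> r" by auto
    have top: "norm (coeff (xpow_rem (Suc n) lam m) n) \<le> B * s ^ m"
    proof (rule norm_recurrence_le[where x = "\<lambda>m. coeff (xpow_rem (Suc n) lam m) n"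
                                       and f = "\<lambda>m. coeff (xpow_rem n lam m) (n - 1)" and c = "lam (Suc n)"])
      show "coeff (xpow_rem (Suc n) lam (Suc m)) n =
              coeff (xpow_rem n lam m) (n - 1) + lam (Suc n) * coeff (xpow_rem (Suc n) lam m) n" for m
        by (rule top_coeff_xpow_rem_Suc)
      show "norm (coeff (xpow_rem n lam m) (n - 1)) \<le> K * s ^ m" for m
        by (rule K(2)[OF lam_n])
      show "norm (coeff (xpow_rem (Suc n) lam 0) n) \<le> B"
        using B by (cases n) (simp_all add: xpow_rem_small coeff_monom)
    qed (use lam assms B in auto)
    have "norm (coeff (xpow_rem (Suc n) lam m) i)
        \<le> norm (coeff (xpow_rem n lam m) i) + norm (coeff (xpow_rem (Suc n) lam m) n) * norm (coeff (q_lam n lam) i)"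
      by (subst xpow_rem_Suc_degree) (metis coeff_add coeff_smult norm_mult norm_triangle_ineq)
    also have "\<dots> \<le> K * s ^ m + (B * s ^ m) * (1 + r) ^ n"
      using K(2)[OF lam_n] top norm_coeff_q_lam_le[OF assms(1) lam_n] B assms
      by (intro add_mono mult_mono) auto
    finally show "norm (coeff (xpow_rem (Suc n) lam m) i) \<le> (K + B * (1 + r) ^ n) * s ^ m"
      by (simp add: algebra_simps)
  qed
qed

lemma tendsto_coeff_xpow_rem:
  assumes "\<forall>i\<in>{1..n}. ((\<lambda>x. g x i) \<longlongrightarrow> lam i) F"
  shows "((\<lambda>x. coeff (xpow_rem n (g x) m) i) \<longlongrightarrow> coeff (xpow_rem n lam m) i) F"
proof (cases "n = 0")
  case False
  then show ?thesis
  proof (induction m arbitrary: i)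
    case 0
    then show ?case by (simp add: xpow_rem_small)
  next
    case (Suc m)
    then show ?case unfolding coeff_xpow_rem_Suc[OF Suc.prems[unfolded neq0_conv]]
      by (auto intro!: tendsto_intros tendsto_coeff_q_lam assms)
  qed
qed simp

lemma tendsto_component_at: "((\<lambda>y. y i) \<longlongrightarrow> x i) (at x within S)"
  using continuous_on_product_coordinates[of i]
  by (metis continuous_on_def iso_tuple_UNIV_I tendsto_within_subset top_greatest)

lemma continuous_on_coeff_xpow_rem: "continuous_on UNIV (\<lambda>lam. coeff (xpow_rem n lam m) i)"
  unfolding continuous_on_def by (auto intro: tendsto_coeff_xpow_rem tendsto_component_at)

lemma poly_xpow_rem_root:
  assumes "i \<in> {1..n}"
  shows "poly (xpow_rem n lam m) (lam i) = lam i ^ m"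
proof -
  obtain p where "monom 1 m - xpow_rem n lam m = q_lam n lam * p"
    using q_lam_dvd_xpow_rem by (rule dvdE)
  then have "poly (monom 1 m - xpow_rem n lam m) (lam i) = 0"
    using assms by (auto simp: poly_q_lam_eq_0_iff)
  then show ?thesis by (simp add: poly_monom)
qed

section \<open>Cramer's rule for the Vandermonde system\<close>

lemma leibniz_sum_reindex:
  fixes M :: "'b \<Rightarrow> 'b \<Rightarrow> 'c::comm_ring_1"
  assumes f: "bij_betw f A B" and A: "finite A"
  shows "(\<Sum>p | p permutes B. of_int (sign p) * (\<Prod>i\<in>B. M i (p i)))
       = (\<Sum>p | p permutes A. of_int (sign p) * (\<Prod>i\<in>A. M (f i) (f (p i))))"
proof -
  have inj: "inj_on f A" and B: "B = f ` A" using f by (auto simp: bij_betw_def)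
  have "map_permutation A f p = (\<lambda>x. if x \<in> B then f (p (inv_into A f x)) else x)" for p
    unfolding map_permutation_def restrict_id_def B by (auto simp: fun_eq_iff)
  then have "bij_betw (map_permutation A f) {p. p permutes A} {p. p permutes B}"
    using bij_betw_permutations[OF f] by presburger
  then have "(\<Sum>p | p permutes B. of_int (sign p) * (\<Prod>i\<in>B. M i (p i)))
      = (\<Sum>p | p permutes A. of_int (sign (map_permutation A f p)) * (\<Prod>i\<in>B. M i (map_permutation A f p i)))"
    by (rule sum.reindex_bij_betw[symmetric])
  also have "\<dots> = (\<Sum>p | p permutes A. of_int (sign p) * (\<Prod>i\<in>A. M (f i) (f (p i))))"
  proof (rule sum.cong[OF refl])
    fix p assume "p \<in> {p. p permutes A}"
    then have p: "p permutes A" by simp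
    have "(\<Prod>i\<in>B. M i (map_permutation A f p i)) = (\<Prod>i\<in>A. M (f i) (map_permutation A f p (f i)))"
      unfolding B by (simp add: prod.reindex[OF inj])
    also have "\<dots> = (\<Prod>i\<in>A. M (f i) (f (p i)))"
      using inj by (intro prod.cong refl) (simp add: map_permutation_apply)
    finally show "of_int (sign (map_permutation A f p)) * (\<Prod>i\<in>B. M i (map_permutation A f p i))
        = of_int (sign p) * (\<Prod>i\<in>A. M (f i) (f (p i)))"
      using sign_map_permutation[OF inj p A] by simp
  qed
  finally show ?thesis .
qed

definition shift_mat :: "nat \<Rightarrow> (nat \<Rightarrow> nat \<Rightarrow> 'a) \<Rightarrow> 'a Matrix.mat" where
  "shift_mat n M = Matrix.mat n n (\<lambda>(i, r). M (Suc i) (Suc r))"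

lemma shift_mat_carrier [simp]: "shift_mat n M \<in> carrier_mat n n"
  by (simp add: shift_mat_def)

lemma index_shift_mat [simp]:
  "dim_row (shift_mat n M) = n" "dim_col (shift_mat n M) = n"
  "i < n \<Longrightarrow> r < n \<Longrightarrow> shift_mat n M $$ (i, r) = M (Suc i) (Suc r)"
  by (simp_all add: shift_mat_def)

lemma det_n_eq_det: "det_n n M = Determinant.det (shift_mat n M)"
proof -
  have "bij_betw Suc {0..<n} {1..n}"
    by (auto simp: bij_betw_def image_iff)
  then have "det_n n M = (\<Sum>p | p permutes {0..<n}. of_int (sign p) * (\<Prod>i = 0..<n. M (Suc i) (Suc (p i))))"
    unfolding det_n_def by (rule leibniz_sum_reindex) simp
  also have "\<dots> = Determinant.det (shift_mat n M)"
    unfolding det_def'[OF shift_mat_carrier]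
    by (intro sum.cong prod.cong refl) (auto simp: shift_mat_def dest: permutes_in_image)
  finally show ?thesis .
qed

lemma shift_mat_Vmat_mult_vec:
  assumes "i < n" "v \<in> carrier_vec n"
  shows "(shift_mat n (Vmat lam) *\<^sub>v v) $ i = (\<Sum>s<n. v $ s * lam (Suc i) ^ s)"
  using assms by (simp add: shift_mat_def Vmat_def Matrix.scalar_prod_def lessThan_atLeast0 mult.commute)

lemma shift_mat_Vmat_rep:
  assumes j: "j \<in> {1..n}"
  shows "shift_mat n (Vmat_rep j m lam) = replace_col (shift_mat n (Vmat lam))
           (shift_mat n (Vmat lam) *\<^sub>v vec n (\<lambda>s. coeff (xpow_rem n lam m) s)) (j - 1)"
proof (rule eq_matI)
  fix i r assume "i < dim_row (replace_col (shift_mat n (Vmat lam))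
           (shift_mat n (Vmat lam) *\<^sub>v vec n (\<lambda>s. coeff (xpow_rem n lam m) s)) (j - 1))"
    "r < dim_col (replace_col (shift_mat n (Vmat lam))
           (shift_mat n (Vmat lam) *\<^sub>v vec n (\<lambda>s. coeff (xpow_rem n lam m) s)) (j - 1))"
  then have i: "i < n" and r: "r < n" by (auto simp: replace_col_def shift_mat_def)
  have "(shift_mat n (Vmat lam) *\<^sub>v vec n (\<lambda>s. coeff (xpow_rem n lam m) s)) $ i = lam (Suc i) ^ m"
    using i by (subst shift_mat_Vmat_mult_vec)
      (simp_all add: poly_eq_sum_lessThan[symmetric] coeff_xpow_rem_eq_0 poly_xpow_rem_root)
  then show "shift_mat n (Vmat_rep j m lam) $$ (i, r) = replace_col (shift_mat n (Vmat lam))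
           (shift_mat n (Vmat lam) *\<^sub>v vec n (\<lambda>s. coeff (xpow_rem n lam m) s)) (j - 1) $$ (i, r)"
    unfolding replace_col_def using i r j by (auto simp: Vmat_rep_def Vmat_def)
qed (auto simp: replace_col_def)

lemma det_Vmat_rep:
  assumes "j \<in> {1..n}"
  shows "det_n n (Vmat_rep j m lam) = coeff (xpow_rem n lam m) (j - 1) * det_n n (Vmat lam)"
  using assms unfolding det_n_eq_det shift_mat_Vmat_rep[OF assms]
  by (subst cramer_lemma_mat[of _ n]) auto

lemma det_Vmat_nonzero:
  assumes "inj_on lam {1..n}"
  shows "det_n n (Vmat lam) \<noteq> 0"
proof
  assume "det_n n (Vmat lam) = 0"
  then obtain v where v: "v \<in> carrier_vec n" "v \<noteq> 0\<^sub>v n" "shift_mat n (Vmat lam) *\<^sub>v v = 0\<^sub>v n"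
    unfolding det_n_eq_det det_0_iff_vec_prod_zero[OF shift_mat_carrier] by blast
  define p where "p = (\<Sum>s<n. monom (v $ s) s)"
  have coeff_p: "coeff p i = (if i < n then v $ i else 0)" for i
    unfolding p_def by (simp add: coeff_sum)
  have roots: "poly p (lam i) = 0" if "i \<in> {1..n}" for i
  proof -
    have "i - 1 < n" using that by auto
    then have "(\<Sum>s<n. v $ s * lam (Suc (i - 1)) ^ s) = 0"
      using v shift_mat_Vmat_mult_vec[of "i - 1" n v lam] by simp
    then show ?thesis
      using that by (simp add: p_def poly_sum poly_monom)
  qed
  have "p = 0"
  proof (rule ccontr)
    assume "p \<noteq> 0"
    then have "degree p < card (lam ` {1..n})"
      using card_image[OF assms] by (auto intro!: degree_less_if_coeff_eq_0 simp: coeff_p)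
    then have "p = 0"
      by (intro poly_eqI_degree[of "lam ` {1..n}"]) (auto simp: roots)
    with \<open>p \<noteq> 0\<close> show False by contradiction
  qed
  then have "v = 0\<^sub>v n"
    using v(1) coeff_p by (intro eq_vecI) (auto simp: poly_eq_iff split: if_splits)
  with v(2) show False by contradiction
qed

lemma eventually_inj_on_perturbation:
  fixes lam :: "nat \<Rightarrow> complex"
  shows "eventually (\<lambda>t::real. inj_on (\<lambda>i. lam i + of_real t * of_nat i) {1..n}) (at 0)"
proof -
  let ?S = "(\<lambda>(i, i'). Re ((lam i' - lam i) / (of_nat i - of_nat i'))) ` ({1..n} \<times> {1..n})"
  have "eventually (\<lambda>t. t \<notin> ?S) (at 0)"
    using islimpt_finite[of ?S 0] by (simp add: islimpt_iff_eventually)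
  then show ?thesis
  proof eventually_elim
    case (elim t)
    show ?case
    proof (rule inj_onI, rule ccontr)
      fix i i' assume i: "i \<in> {1..n}" "i' \<in> {1..n}" "i \<noteq> i'"
        and eq: "lam i + of_real t * of_nat i = lam i' + of_real t * of_nat i'"
      then have "of_real t = (lam i' - lam i) / (of_nat i - of_nat i' :: complex)"
        by (simp add: field_simps)
      then have "t = Re ((lam i' - lam i) / (of_nat i - of_nat i'))"
        by (metis Re_complex_of_real)
      then have "t \<in> ?S"
        using i by force
      with elim show False by contradiction
    qed
  qed
qed

lemma continuous_eq_if_eq_on_inj:
  fixes f g :: "(nat \<Rightarrow> complex) \<Rightarrow> 'a::t2_space"
  assumes "continuous_on UNIV f" "continuous_on UNIV g"
    and "\<And>lam. inj_on lam {1..n} \<Longrightarrow> f lam = g lam"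
  shows "f = g"
proof
  fix lam
  define L :: "real \<Rightarrow> nat \<Rightarrow> complex" where "L t = (\<lambda>i. lam i + of_real t * of_nat i)" for t :: real
  have L: "continuous_on UNIV L" "L 0 = lam"
    unfolding L_def by (auto intro!: continuous_on_coordinatewise_then_product continuous_intros)
  have lim: "((\<lambda>t. h (L t)) \<longlongrightarrow> h lam) (at 0)" if "continuous_on UNIV h" for h :: "_ \<Rightarrow> 'a"
    using continuous_on_compose[OF L(1) continuous_on_subset[OF that]] L(2)
    by (simp add: continuous_on_eq_continuous_at isCont_def o_def) metis
  have "eventually (\<lambda>t. f (L t) = g (L t)) (at 0)"
    using eventually_inj_on_perturbation[of lam n] by eventually_elim (simp add: assms(3) L_def)
  then have "((\<lambda>t. f (L t)) \<longlongrightarrow> g lam) (at 0)"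
    using lim[OF assms(2)] by (simp add: tendsto_cong)
  with lim[OF assms(1)] show "f lam = g lam"
    using tendsto_unique[OF trivial_limit_at] by blast
qed

text \<open>By Cramer's rule the remainder coefficient satisfies the defining property of \<open>Pnjm\<close>;
  it is the only continuous solution because tuples with distinct entries are dense.\<close>
lemma Pnjm_eq_coeff_xpow_rem:
  assumes "j \<in> {1..n}"
  shows "Pnjm n j m lam = coeff (xpow_rem n lam m) (j - 1)"
proof -
  let ?f = "\<lambda>lam. coeff (xpow_rem n lam m) (j - 1)"
  have "Pnjm n j m = ?f"
    unfolding Pnjm_def
  proof (rule the_equality)
    show "continuous_on UNIV ?f \<and> (\<forall>lam. ?f lam * det_n n (Vmat lam) = det_n n (Vmat_rep j m lam))"
      using assms by (simp add: continuous_on_coeff_xpow_rem det_Vmat_rep)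
    fix g assume g: "continuous_on UNIV g \<and> (\<forall>lam. g lam * det_n n (Vmat lam) = det_n n (Vmat_rep j m lam))"
    show "g = ?f"
    proof (rule continuous_eq_if_eq_on_inj)
      fix lam :: "nat \<Rightarrow> complex" assume "inj_on lam {1..n}"
      then show "g lam = ?f lam"
        using g det_Vmat_nonzero det_Vmat_rep[OF assms] by (metis mult_cancel_right)
    qed (use g continuous_on_coeff_xpow_rem in auto)
  qed
  then show ?thesis by simp
qed

lemma normA_nonneg: "0 \<le> normA k a"
  unfolding normA_def by (rule infsum_nonneg) simp

lemma zero_in_Alg: "(\<lambda>_. 0) \<in> Alg k"
  by (simp add: Alg_def)

lemma normA_zero: "normA k (\<lambda>_. 0) = 0"
  by (simp add: normA_def)

lemma Alg_add: "a \<in> Alg k \<Longrightarrow> b \<in> Alg k \<Longrightarrow> (\<lambda>x. a x + b x) \<in> Alg k"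
  unfolding Alg_def
  by (auto intro: summable_on_comparison_test[OF summable_on_add] norm_triangle_ineq)

lemma Alg_cmult: "a \<in> Alg k \<Longrightarrow> (\<lambda>x. c * a x) \<in> Alg k"
  unfolding Alg_def
  by (auto intro: summable_on_comparison_test[OF summable_on_cmult_right] simp: norm_mult)

lemma Alg_diff: "a \<in> Alg k \<Longrightarrow> b \<in> Alg k \<Longrightarrow> (\<lambda>x. b x - a x) \<in> Alg k"
  using Alg_add[of b k "\<lambda>x. (-1) * a x"] Alg_cmult[of a k "-1"] by simp

lemma dnorm_le:
  assumes "\<And>a. a \<in> Alg k \<Longrightarrow> normA k a \<le> 1 \<Longrightarrow> norm (f a) \<le> B"
  shows "dnorm k f \<le> B"
  unfolding dnorm_def
  by (intro cSup_least) (use assms zero_in_Alg normA_zero in \<open>auto intro!: exI[of _ "\<lambda>_. 0"]\<close>)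

lemma Phi_cmult: "Phi k xi (\<lambda>x. c * a x) z = c * Phi k xi a z"
  unfolding Phi_def mult.assoc by (rule infsum_cmult_right')

definition gam_set :: "nat \<Rightarrow> (nat \<Rightarrow> complex poly) \<Rightarrow> real set" where
  "gam_set k xi = {c. c > 0 \<and> (\<forall>j\<in>{1..k}. poly (xi j) ` ball 0 c \<subseteq> ball 0 1)}"

lemma gam_eq_Sup: "gam k xi = Sup (gam_set k xi)"
  by (simp add: gam_def gam_set_def)

locale composition =
  fixes k :: nat and xi :: "nat \<Rightarrow> complex poly"
  assumes k_ge_1: "1 \<le> k" and xi_P0: "\<forall>j\<in>{1..k}. xi j \<in> P0" and xi_1: "xi 1 = [:0, 1:]"
begin

lemma gam_set_nonempty: "gam_set k xi \<noteq> {}"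
proof -
  have "open (\<Inter>j\<in>{1..k}. {z. norm (poly (xi j) z) < 1})"
    by (intro open_INT finite_atLeastAtMost ballI open_Collect_less continuous_intros)
  moreover have "0 \<in> (\<Inter>j\<in>{1..k}. {z. norm (poly (xi j) z) < 1})"
    using xi_P0 by (simp add: P0_def)
  ultimately obtain e where "e > 0" "ball 0 e \<subseteq> (\<Inter>j\<in>{1..k}. {z. norm (poly (xi j) z) < 1})"
    by (meson open_contains_ball)
  then have "e \<in> gam_set k xi"
    by (auto simp: gam_set_def)
  then show ?thesis by blast
qed

lemma gam_set_le_1: "c \<in> gam_set k xi \<Longrightarrow> c \<le> 1"
proof (rule ccontr)
  assume c: "c \<in> gam_set k xi" "\<not> c \<le> 1"
  then have "poly (xi 1) 1 \<in> ball 0 1"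
    using k_ge_1 unfolding gam_set_def by fastforce
  then show False using xi_1 by simp
qed

lemma gam_pos: "0 < gam k xi"
proof -
  obtain c where c: "c \<in> gam_set k xi" using gam_set_nonempty by blast
  then have "0 < c" by (simp add: gam_set_def)
  also have "c \<le> gam k xi"
    unfolding gam_eq_Sup using c gam_set_le_1 by (intro cSup_upper bdd_aboveI) auto
  finally show ?thesis .
qed

lemma gam_le_1: "gam k xi \<le> 1"
  unfolding gam_eq_Sup using gam_set_nonempty gam_set_le_1 by (rule cSup_least)

lemma norm_poly_xi_less_1:
  assumes "norm z < gam k xi" "j \<in> {1..k}"
  shows "norm (poly (xi j) z) < 1"
proof -
  obtain c where c: "c \<in> gam_set k xi" "norm z < c"
    using assms(1) less_cSup_iff[OF gam_set_nonempty, of "norm z"] gam_set_le_1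
    unfolding gam_eq_Sup by (meson bdd_aboveI)
  then have "poly (xi j) ` ball 0 c \<subseteq> ball 0 1"
    using assms(2) by (simp add: gam_set_def)
  then show ?thesis using c(2) by (auto simp: image_subset_iff)
qed

lemma norm_prod_xi_le_1:
  assumes "norm z < gam k xi"
  shows "norm (\<Prod>i\<in>{1..k}. poly (xi i) z ^ n i) \<le> 1"
  unfolding prod_norm[symmetric] norm_power
  by (rule prod_le_1) (auto intro!: power_le_one less_imp_le[OF norm_poly_xi_less_1[OF assms]])

lemma abs_summable_on_Phi_terms:
  assumes "a \<in> Alg k" "norm z < gam k xi"
  shows "(\<lambda>n. norm (a n * (\<Prod>i\<in>{1..k}. poly (xi i) z ^ n i))) summable_on MI k"
proof (rule Infinite_Sum.abs_summable_on_comparison_test)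
  show "(\<lambda>n. norm (a n)) summable_on MI k" using assms(1) by (simp add: Alg_def)
  fix n show "norm (a n * (\<Prod>i\<in>{1..k}. poly (xi i) z ^ n i)) \<le> norm (a n)"
    using norm_prod_xi_le_1[OF assms(2), of n] by (simp add: norm_mult mult_left_le)
qed

lemma norm_Phi_le:
  assumes a: "a \<in> Alg k" and z: "norm z < gam k xi"
  shows "norm (Phi k xi a z) \<le> normA k a"
proof -
  have "norm (Phi k xi a z) \<le> (\<Sum>\<^sub>\<infinity>n\<in>MI k. norm (a n * (\<Prod>i\<in>{1..k}. poly (xi i) z ^ n i)))"
    unfolding Phi_def by (rule norm_infsum_bound[OF abs_summable_on_Phi_terms[OF a z]])
  also have "\<dots> \<le> normA k a"
    unfolding normA_def
    by (rule infsum_mono[OF abs_summable_on_Phi_terms[OF a z]])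
      (use a norm_prod_xi_le_1[OF z] in \<open>auto simp: Alg_def norm_mult mult_left_le\<close>)
  finally show ?thesis .
qed

lemma Phi_holomorphic:
  assumes a: "a \<in> Alg k"
  shows "Phi k xi a holomorphic_on ball 0 (gam k xi)"
proof -
  have "Phi k xi a holomorphic_on ball 0 \<rho>" if "\<rho> < gam k xi" for \<rho>
  proof (rule holomorphic_uniform_limit)
    show "uniform_limit (cball 0 \<rho>) (\<lambda>X z. \<Sum>n\<in>X. a n * (\<Prod>i\<in>{1..k}. poly (xi i) z ^ n i))
            (Phi k xi a) (finite_subsets_at_top (MI k))"
      unfolding Phi_def[abs_def]
    proof (rule Weierstrass_m_test_general)
      show "(\<lambda>n. norm (a n)) summable_on MI k" using a by (simp add: Alg_def)
      fix n z assume "z \<in> cball (0::complex) \<rho>"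
      then have "norm z < gam k xi" using that by simp
      then show "norm (a n * (\<Prod>i\<in>{1..k}. poly (xi i) z ^ n i)) \<le> norm (a n)"
        using norm_prod_xi_le_1 by (simp add: norm_mult mult_left_le)
    qed
  qed (auto intro!: always_eventually holomorphic_on_imp_continuous_on holomorphic_intros)
  then show ?thesis
    by (metis holomorphic_on_open dense mem_ball_0 open_ball)
qed

lemma Phi_add:
  assumes "a \<in> Alg k" "b \<in> Alg k" "norm z < gam k xi"
  shows "Phi k xi (\<lambda>x. a x + b x) z = Phi k xi a z + Phi k xi b z"
  unfolding Phi_def distrib_right
  by (rule infsum_add) (use assms abs_summable_on_Phi_terms in \<open>blast intro: abs_summable_summable\<close>)+

lemma alpha_add:
  assumes a: "a \<in> Alg k" and b: "b \<in> Alg k"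
  shows "alpha k xi (\<lambda>x. a x + b x) m = alpha k xi a m + alpha k xi b m"
proof -
  have "(deriv ^^ m) (Phi k xi (\<lambda>x. a x + b x)) 0 = (deriv ^^ m) (\<lambda>z. Phi k xi a z + Phi k xi b z) 0"
    using a b gam_pos
    by (intro higher_deriv_transform_within_open[of _ "ball 0 (gam k xi)"])
       (auto intro!: holomorphic_intros Phi_holomorphic Alg_add simp: Phi_add)
  also have "\<dots> = (deriv ^^ m) (Phi k xi a) 0 + (deriv ^^ m) (Phi k xi b) 0"
    using a b gam_pos by (intro higher_deriv_add[of _ "ball 0 (gam k xi)"] Phi_holomorphic) auto
  finally show ?thesis unfolding alpha_def by (simp add: add_divide_distrib)
qed

lemma alpha_cmult:
  assumes a: "a \<in> Alg k"
  shows "alpha k xi (\<lambda>x. c * a x) m = c * alpha k xi a m"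
proof -
  have "(deriv ^^ m) (\<lambda>z. c * Phi k xi a z) 0 = c * (deriv ^^ m) (Phi k xi a) 0"
    using a gam_pos by (intro higher_deriv_cmult[of _ "ball 0 (gam k xi)"] Phi_holomorphic) auto
  then show ?thesis unfolding alpha_def Phi_cmult by simp
qed

lemma norm_alpha_le:
  assumes a: "a \<in> Alg k" and \<rho>: "0 < \<rho>" "\<rho> < gam k xi"
  shows "norm (alpha k xi a m) \<le> normA k a / \<rho> ^ m"
proof -
  have hol: "Phi k xi a holomorphic_on ball 0 (gam k xi)" by (rule Phi_holomorphic[OF a])
  have sub: "cball 0 \<rho> \<subseteq> ball 0 (gam k xi)" using \<rho> by auto
  have "norm ((deriv ^^ m) (Phi k xi a) 0) \<le> fact m * normA k a / \<rho> ^ m"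
  proof (rule Cauchy_inequality)
    show "Phi k xi a holomorphic_on ball 0 \<rho>"
      using hol sub ball_subset_cball holomorphic_on_subset by blast
    show "continuous_on (cball 0 \<rho>) (Phi k xi a)"
      using holomorphic_on_imp_continuous_on[OF hol] sub continuous_on_subset by blast
    fix x :: complex assume "norm (0 - x) = \<rho>"
    then show "norm (Phi k xi a x) \<le> normA k a"
      using \<rho> by (intro norm_Phi_le[OF a]) simp
  qed fact
  then show ?thesis unfolding alpha_def by (simp add: norm_divide field_simps)
qed

lemma alpha_sums:
  assumes "a \<in> Alg k" "norm z < gam k xi"
  shows "(\<lambda>m. alpha k xi a m * z ^ m) sums Phi k xi a z"
  using holomorphic_power_series[OF Phi_holomorphic[OF assms(1)], of z] assms(2)
  unfolding alpha_def by simp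

lemma Phi_u1pow: "Phi k xi (u1pow s) z = z ^ s"
proof -
  define e where "e = (\<lambda>i::nat. if i = 1 then s else 0)"
  have "e \<in> MI k" using k_ge_1 unfolding MI_def e_def by auto
  then have "Phi k xi (u1pow s) z = (\<Prod>i\<in>{1..k}. poly (xi i) z ^ e i)"
    unfolding Phi_def u1pow_def e_def[symmetric]
    by (subst infsum_cong_neutral[where T = "{e}"]) auto
  also have "\<dots> = z ^ s"
    using k_ge_1 xi_1 by (simp add: e_def if_distrib prod.delta cong: if_cong)
  finally show ?thesis .
qed

lemma alpha_u1pow: "alpha k xi (u1pow s) m = (if m = s then 1 else 0)"
  unfolding alpha_def Phi_u1pow by (rule higher_deriv_power_at_0)

end

context composition
begin

lemma obtain_radii:
  fixes lam :: "nat \<Rightarrow> complex"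
  assumes "\<forall>i\<in>{1..n}. lam i \<in> ball 0 (gam k xi)"
  obtains r R \<rho> where "0 \<le> r" "r < R" "R < \<rho>" "\<rho> < gam k xi" "\<forall>i\<in>{1..n}. norm (lam i) \<le> r"
proof -
  define r where "r = Max (insert 0 ((\<lambda>i. norm (lam i)) ` {1..n}))"
  have fin: "finite (insert 0 ((\<lambda>i. norm (lam i)) ` {1..n}))" by (simp add: finite_imageI)
  have "0 \<le> r" unfolding r_def by (rule Max_ge[OF fin]) simp
  moreover have "\<forall>i\<in>{1..n}. norm (lam i) \<le> r"
    unfolding r_def by (intro ballI Max_ge[OF fin]) simp
  moreover have "r < gam k xi"
    unfolding r_def using assms gam_pos by (subst Max_less_iff[OF fin]) auto
  ultimately show ?thesis
    by (intro that[of r "(2 * r + gam k xi) / 3" "(r + 2 * gam k xi) / 3"]) auto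
qed

lemma phi_series_bound:
  assumes lam: "\<forall>i\<in>{1..n}. lam i \<in> ball 0 (gam k xi)" and j: "j \<in> {1..n}"
  obtains K t where "0 \<le> K" "0 \<le> t" "t < 1"
    "\<And>a m. a \<in> Alg k \<Longrightarrow> norm (Pnjm n j m lam * alpha k xi a m) \<le> K * normA k a * t ^ m"
proof -
  obtain r R \<rho> where c: "0 \<le> r" "r < R" "R < \<rho>" "\<rho> < gam k xi" "\<forall>i\<in>{1..n}. norm (lam i) \<le> r"
    using obtain_radii[OF lam] .
  obtain K where K: "K \<ge> 0" "\<And>m i. norm (coeff (xpow_rem n lam m) i) \<le> K * R ^ m"
    using norm_coeff_xpow_rem_le[OF c(1,2), of n] c(5) by metis
  show ?thesis
  proof (rule that[of K "R / \<rho>"])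
    fix a m assume a: "a \<in> Alg k"
    have "norm (Pnjm n j m lam * alpha k xi a m) \<le> (K * R ^ m) * (normA k a / \<rho> ^ m)"
      unfolding norm_mult Pnjm_eq_coeff_xpow_rem[OF j]
      using c K normA_nonneg by (intro mult_mono norm_alpha_le[OF a]) auto
    also have "\<dots> = K * normA k a * (R / \<rho>) ^ m"
      by (simp add: power_divide)
    finally show "norm (Pnjm n j m lam * alpha k xi a m) \<le> K * normA k a * (R / \<rho>) ^ m" .
  qed (use c K in auto)
qed

lemma summable_phi_series:
  assumes "\<forall>i\<in>{1..n}. lam i \<in> ball 0 (gam k xi)" "j \<in> {1..n}" "a \<in> Alg k"
  shows "summable (\<lambda>m. Pnjm n j m lam * alpha k xi a m)"
proof -
  obtain K t where t: "0 \<le> t" "t < 1"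
    and bound: "\<And>m. norm (Pnjm n j m lam * alpha k xi a m) \<le> K * normA k a * t ^ m"
    using phi_series_bound[OF assms(1,2)] assms(3) by metis
  have "summable (\<lambda>m. K * normA k a * t ^ m)"
    using t by (intro summable_mult summable_geometric) simp
  then show ?thesis by (rule summable_comparison_test'[OF _ bound])
qed

lemma phi_bounded:
  assumes lam: "\<forall>i\<in>{1..n}. lam i \<in> ball 0 (gam k xi)" and j: "j \<in> {1..n}"
  obtains C where "0 \<le> C" "\<And>a. a \<in> Alg k \<Longrightarrow> norm (phi k xi n j lam a) \<le> C * normA k a"
proof -
  obtain K t where Kt: "0 \<le> K" "0 \<le> t" "t < 1"
    "\<And>a m. a \<in> Alg k \<Longrightarrow> norm (Pnjm n j m lam * alpha k xi a m) \<le> K * normA k a * t ^ m"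
    using phi_series_bound[OF lam j] by metis
  show ?thesis
  proof (rule that[of "K / (1 - t)"])
    fix a assume a: "a \<in> Alg k"
    have "norm (phi k xi n j lam a) \<le> (\<Sum>m. K * normA k a * t ^ m)"
      unfolding phi_def
      using Kt a by (intro norm_suminf_le summable_mult summable_geometric) auto
    also have "\<dots> = K / (1 - t) * normA k a"
      using Kt by (simp add: suminf_mult suminf_geometric)
    finally show "norm (phi k xi n j lam a) \<le> K / (1 - t) * normA k a" .
  qed (use Kt in auto)
qed

lemma phi_add:
  assumes "\<forall>i\<in>{1..n}. lam i \<in> ball 0 (gam k xi)" "j \<in> {1..n}" "a \<in> Alg k" "b \<in> Alg k"
  shows "phi k xi n j lam (\<lambda>x. a x + b x) = phi k xi n j lam a + phi k xi n j lam b"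
  unfolding phi_def alpha_add[OF assms(3,4)] distrib_left
  using assms by (intro suminf_add[symmetric] summable_phi_series)

lemma phi_cmult:
  assumes "\<forall>i\<in>{1..n}. lam i \<in> ball 0 (gam k xi)" "j \<in> {1..n}" "a \<in> Alg k"
  shows "phi k xi n j lam (\<lambda>x. c * a x) = c * phi k xi n j lam a"
proof -
  have "phi k xi n j lam (\<lambda>x. c * a x) = (\<Sum>m. c * (Pnjm n j m lam * alpha k xi a m))"
    unfolding phi_def alpha_cmult[OF assms(3)] by (simp add: algebra_simps)
  also have "\<dots> = c * phi k xi n j lam a"
    unfolding phi_def by (rule suminf_mult[OF summable_phi_series[OF assms]])
  finally show ?thesis .
qed

lemma phi_diff:
  assumes "\<forall>i\<in>{1..n}. lam i \<in> ball 0 (gam k xi)" "j \<in> {1..n}" "a \<in> Alg k" "b \<in> Alg k"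
  shows "phi k xi n j lam (\<lambda>x. b x - a x) = phi k xi n j lam b - phi k xi n j lam a"
proof -
  have "phi k xi n j lam (\<lambda>x. b x + (-1) * a x) = phi k xi n j lam b + phi k xi n j lam (\<lambda>x. (-1) * a x)"
    using assms by (intro phi_add Alg_cmult)
  also have "phi k xi n j lam (\<lambda>x. (-1) * a x) = - phi k xi n j lam a"
    using phi_cmult[OF assms(1-3), of "-1"] by simp
  finally show ?thesis by simp
qed

lemma phi_continuous:
  assumes lam: "\<forall>i\<in>{1..n}. lam i \<in> ball 0 (gam k xi)" and j: "j \<in> {1..n}"
    and a: "a \<in> Alg k" and e: "0 < \<epsilon>"
  obtains \<delta> where "0 < \<delta>"
    "\<And>b. b \<in> Alg k \<Longrightarrow> normA k (\<lambda>x. b x - a x) < \<delta> \<Longrightarrow> norm (phi k xi n j lam b - phi k xi n j lam a) < \<epsilon>"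
proof -
  obtain C where C: "0 \<le> C" "\<And>a. a \<in> Alg k \<Longrightarrow> norm (phi k xi n j lam a) \<le> C * normA k a"
    using phi_bounded[OF lam j] by metis
  show ?thesis
  proof (rule that[of "\<epsilon> / (C + 1)"])
    fix b assume b: "b \<in> Alg k" and d: "normA k (\<lambda>x. b x - a x) < \<epsilon> / (C + 1)"
    have "norm (phi k xi n j lam b - phi k xi n j lam a) \<le> C * normA k (\<lambda>x. b x - a x)"
      using C(2)[OF Alg_diff[OF a b]] by (simp add: phi_diff[OF lam j a b])
    also have "\<dots> \<le> C * (\<epsilon> / (C + 1))" using d C(1) by (intro mult_left_mono) auto
    also have "\<dots> < \<epsilon>" using C(1) e by (simp add: field_simps)
    finally show "norm (phi k xi n j lam b - phi k xi n j lam a) < \<epsilon>" .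
  qed (use e C in simp)
qed

lemma phi_u1pow:
  assumes "j \<in> {1..n}" "r \<in> {1..n}"
  shows "phi k xi n j lam (u1pow (r - 1)) = (if j = r then 1 else 0)"
proof -
  have "phi k xi n j lam (u1pow (r - 1)) = (\<Sum>m. if m = r - 1 then Pnjm n j m lam else 0)"
    unfolding phi_def alpha_u1pow by (simp add: if_distrib cong: if_cong)
  also have "\<dots> = Pnjm n j (r - 1) lam"
    by (rule sums_unique[symmetric, OF sums_single])
  also have "\<dots> = (if j = r then 1 else 0)"
    using assms by (auto simp: Pnjm_eq_coeff_xpow_rem xpow_rem_small coeff_monom)
  finally show ?thesis .
qed

end

section \<open>Their common kernel\<close>

definition phi_interp ::
    "nat \<Rightarrow> (nat \<Rightarrow> complex poly) \<Rightarrow> nat \<Rightarrow> (nat \<Rightarrow> complex) \<Rightarrow> ((nat \<Rightarrow> nat) \<Rightarrow> complex) \<Rightarrow> complex poly" where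
  "phi_interp k xi n lam a = (\<Sum>i<n. monom (phi k xi n (Suc i) lam a) i)"

lemma coeff_phi_interp:
  "coeff (phi_interp k xi n lam a) i = (if i < n then phi k xi n (Suc i) lam a else 0)"
  by (simp add: phi_interp_def coeff_sum coeff_monom)

context composition
begin

lemma sums_poly_phi_interp:
  assumes lam: "\<forall>i\<in>{1..n}. lam i \<in> ball 0 (gam k xi)" and a: "a \<in> Alg k"
  shows "(\<lambda>m. alpha k xi a m * poly (xpow_rem n lam m) z) sums poly (phi_interp k xi n lam a) z"
proof -
  have "(\<lambda>m. \<Sum>i<n. Pnjm n (Suc i) m lam * alpha k xi a m * z ^ i) sums (\<Sum>i<n. phi k xi n (Suc i) lam a * z ^ i)"
    unfolding phi_def using lam a
    by (intro sums_sum sums_mult2 summable_sums summable_phi_series) auto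
  moreover have "(\<Sum>i<n. Pnjm n (Suc i) m lam * alpha k xi a m * z ^ i) = alpha k xi a m * poly (xpow_rem n lam m) z" for m
    by (simp add: Pnjm_eq_coeff_xpow_rem poly_eq_sum_lessThan[of n] coeff_xpow_rem_eq_0 sum_distrib_left
                  algebra_simps)
  moreover have "(\<Sum>i<n. phi k xi n (Suc i) lam a * z ^ i) = poly (phi_interp k xi n lam a) z"
    by (simp add: phi_interp_def poly_sum poly_monom)
  ultimately show ?thesis by simp
qed

lemma norm_alpha_mult_poly_xpow_rem_le:
  assumes a: "a \<in> Alg k" and \<rho>: "0 < \<rho>" "\<rho> < gam k xi"
    and z: "norm z \<le> R" "R \<le> 1" and K: "0 \<le> K" "\<And>i. norm (coeff (xpow_rem n lam m) i) \<le> K * R ^ m"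
  shows "norm (alpha k xi a m * poly (monom 1 m - xpow_rem n lam m) z) \<le> normA k a * (1 + n * K) * (R / \<rho>) ^ m"
proof -
  have "norm (poly (xpow_rem n lam m) z) \<le> n * (K * R ^ m)"
    using z by (intro norm_poly_le_of_coeff_bound K) (auto simp: coeff_xpow_rem_eq_0)
  moreover have "norm (z ^ m) \<le> R ^ m"
    using z by (simp add: norm_power power_mono)
  ultimately have "norm (poly (monom 1 m - xpow_rem n lam m) z) \<le> (1 + n * K) * R ^ m"
    by (simp add: poly_monom algebra_simps norm_triangle_le_diff)
  then have "norm (alpha k xi a m * poly (monom 1 m - xpow_rem n lam m) z) \<le> normA k a / \<rho> ^ m * ((1 + n * K) * R ^ m)"
    unfolding norm_mult using K(1) normA_nonneg \<rho> by (intro mult_mono norm_alpha_le[OF a]) auto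
  then show ?thesis by (simp add: power_divide)
qed

lemma uniform_limit_Phi_minus_phi_interp:
  assumes lam: "\<forall>i\<in>{1..n}. lam i \<in> ball 0 (gam k xi)" and a: "a \<in> Alg k"
  obtains R where "\<forall>i\<in>{1..n}. norm (lam i) < R" "R < gam k xi"
    "uniform_limit (ball 0 R)
       (\<lambda>N. poly (\<Sum>m<N. Polynomial.smult (alpha k xi a m) (monom 1 m - xpow_rem n lam m)))
       (\<lambda>z. Phi k xi a z - poly (phi_interp k xi n lam a) z) sequentially"
proof -
  obtain r R \<rho> where c: "0 \<le> r" "r < R" "R < \<rho>" "\<rho> < gam k xi" "\<forall>i\<in>{1..n}. norm (lam i) \<le> r"
    using obtain_radii[OF lam] .
  obtain K where K: "K \<ge> 0" "\<And>m i. norm (coeff (xpow_rem n lam m) i) \<le> K * R ^ m"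
    using norm_coeff_xpow_rem_le[OF c(1,2), of n] c(5) by metis
  define f where "f m z = alpha k xi a m * poly (monom 1 m - xpow_rem n lam m) z" for m z
  have bound: "norm (f m z) \<le> normA k a * (1 + n * K) * (R / \<rho>) ^ m" if "z \<in> ball 0 R" for m z
    unfolding f_def using that c gam_le_1 K
    by (intro norm_alpha_mult_poly_xpow_rem_le[OF a]) auto
  have "summable (\<lambda>m. normA k a * (1 + n * K) * (R / \<rho>) ^ m)"
    using c by (intro summable_mult summable_geometric) simp
  with bound have ulim: "uniform_limit (ball 0 R) (\<lambda>N z. \<Sum>m<N. f m z) (\<lambda>z. \<Sum>m. f m z) sequentially"
    by (rule Weierstrass_m_test)
  have partial: "(\<lambda>z. \<Sum>m<N. f m z) = poly (\<Sum>m<N. Polynomial.smult (alpha k xi a m) (monom 1 m - xpow_rem n lam m))" for N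
    by (simp add: fun_eq_iff f_def poly_sum)
  have limit: "(\<Sum>m. f m z) = Phi k xi a z - poly (phi_interp k xi n lam a) z" if "z \<in> ball 0 R" for z
  proof -
    have "norm z < gam k xi" using that c by simp
    then have "(\<lambda>m. alpha k xi a m * z ^ m - alpha k xi a m * poly (xpow_rem n lam m) z)
                 sums (Phi k xi a z - poly (phi_interp k xi n lam a) z)"
      by (intro sums_diff alpha_sums[OF a] sums_poly_phi_interp[OF lam a])
    then show ?thesis unfolding f_def by (simp add: poly_monom right_diff_distrib sums_iff)
  qed
  show ?thesis
  proof (rule that)
    show "uniform_limit (ball 0 R)
       (\<lambda>N. poly (\<Sum>m<N. Polynomial.smult (alpha k xi a m) (monom 1 m - xpow_rem n lam m)))
       (\<lambda>z. Phi k xi a z - poly (phi_interp k xi n lam a) z) sequentially"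
      using ulim unfolding partial by (rule uniform_limit_cong'[THEN iffD1, rotated -1]) (simp_all add: limit)
  qed (use c in auto)
qed

lemma higher_deriv_Phi_eq_phi_interp:
  assumes lam: "\<forall>i\<in>{1..n}. lam i \<in> ball 0 (gam k xi)" and a: "a \<in> Alg k"
    and w: "poly (q_lam n lam) w = 0" and l: "l < order w (q_lam n lam)"
  shows "(deriv ^^ l) (Phi k xi a) w = poly ((pderiv ^^ l) (phi_interp k xi n lam a)) w"
proof -
  define P where "P N = (\<Sum>m<N. Polynomial.smult (alpha k xi a m) (monom 1 m - xpow_rem n lam m))" for N
  obtain R where R: "\<forall>i\<in>{1..n}. norm (lam i) < R" "R < gam k xi"
    and ulim: "uniform_limit (ball 0 R) (\<lambda>N. poly (P N))
                 (\<lambda>z. Phi k xi a z - poly (phi_interp k xi n lam a) z) sequentially"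
    using uniform_limit_Phi_minus_phi_interp[OF lam a] unfolding P_def by blast
  have w_R: "w \<in> ball 0 R" using w R(1) by (auto simp: poly_q_lam_eq_0_iff)
  have "poly ((pderiv ^^ l) (P N)) w = 0" for N
  proof (cases "P N = 0")
    case False
    have "q_lam n lam dvd P N"
      unfolding P_def by (intro dvd_sum Polynomial.dvd_smult q_lam_dvd_xpow_rem)
    then have "order w (q_lam n lam) \<le> order w (P N)"
      using False by (rule dvd_imp_order_le[rotated])
    then show ?thesis using l by (rule higher_pderiv_vanish_if_order)
  qed simp
  then have "(deriv ^^ l) (\<lambda>z. Phi k xi a z - poly (phi_interp k xi n lam a) z) w = 0"
    using ulim w_R by (intro higher_deriv_uniform_limit_of_polys) auto
  moreover have "(deriv ^^ l) (\<lambda>z. Phi k xi a z - poly (phi_interp k xi n lam a) z) w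
      = (deriv ^^ l) (Phi k xi a) w - (deriv ^^ l) (poly (phi_interp k xi n lam a)) w"
    using w_R R(2) by (intro higher_deriv_diff[of _ "ball 0 (gam k xi)"] Phi_holomorphic[OF a])
      (auto intro!: holomorphic_intros)
  ultimately show ?thesis by (simp add: higher_deriv_poly)
qed

lemma Iideal_q_lam_eq:
  assumes lam: "\<forall>i\<in>{1..n}. lam i \<in> ball 0 (gam k xi)"
  shows "Iideal k xi (q_lam n lam) = {a \<in> Alg k. \<forall>j\<in>{1..n}. phi k xi n j lam a = 0}"
proof (intro equalityI subsetI)
  fix a assume "a \<in> Iideal k xi (q_lam n lam)"
  then have a: "a \<in> Alg k" and vanish: "\<And>w l. poly (q_lam n lam) w = 0 \<Longrightarrow> l < order w (q_lam n lam)
      \<Longrightarrow> (deriv ^^ l) (Phi k xi a) w = 0"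
    unfolding Iideal_def by auto
  let ?p = "phi_interp k xi n lam a"
  have "?p = 0"
  proof (rule ccontr)
    assume "?p \<noteq> 0"
    have "order w (q_lam n lam) \<le> order w ?p" for w
    proof (cases "poly (q_lam n lam) w = 0")
      case True
      have "poly ((pderiv ^^ l) ?p) w = 0" if "l < order w (q_lam n lam)" for l
        using vanish[OF True that] higher_deriv_Phi_eq_phi_interp[OF lam a True that] by simp
      then show ?thesis using \<open>?p \<noteq> 0\<close> by (intro order_if_higher_pderiv_vanish) auto
    qed (simp add: order_0I)
    then have "q_lam n lam dvd ?p" using \<open>?p \<noteq> 0\<close> by (rule q_lam_dvd_if_order_le)
    then have "n \<le> degree ?p" using \<open>?p \<noteq> 0\<close> by (metis degree_q_lam dvd_imp_degree_le)
    moreover have "degree ?p < n"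
      using \<open>?p \<noteq> 0\<close> by (intro degree_less_if_coeff_eq_0) (auto simp: coeff_phi_interp)
    ultimately show False by simp
  qed
  have "phi k xi n j lam a = 0" if "j \<in> {1..n}" for j
  proof -
    have "j - 1 < n" "Suc (j - 1) = j" using that by auto
    then show ?thesis using coeff_phi_interp[of k xi n lam a "j - 1"] \<open>?p = 0\<close> by simp
  qed
  then show "a \<in> {a \<in> Alg k. \<forall>j\<in>{1..n}. phi k xi n j lam a = 0}" using a by simp
next
  fix a assume "a \<in> {a \<in> Alg k. \<forall>j\<in>{1..n}. phi k xi n j lam a = 0}"
  then have a: "a \<in> Alg k" and "phi_interp k xi n lam a = 0"
    by (auto simp: phi_interp_def intro!: sum.neutral)
  then show "a \<in> Iideal k xi (q_lam n lam)"
    unfolding Iideal_def using higher_deriv_Phi_eq_phi_interp[OF lam a] by auto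
qed

end

section \<open>Continuity in \<open>lam\<close>\<close>

text \<open>Convergence of the coordinates \<open>1..n\<close> only; the others do not affect \<open>Pnjm n j m\<close>.\<close>
definition near_tuple :: "nat \<Rightarrow> (nat \<Rightarrow> complex) \<Rightarrow> (nat \<Rightarrow> complex) filter" where
  "near_tuple n lam0 = filtercomap (\<lambda>lam. \<Sum>i\<in>{1..n}. dist (lam i) (lam0 i)) (nhds 0)"

lemma near_tuple_neq_bot: "near_tuple n lam0 \<noteq> bot"
  unfolding near_tuple_def
proof (rule filtercomap_neq_bot)
  fix P assume "eventually P (nhds (0::real))"
  then have "P 0" by (rule eventually_nhds_x_imp_x)
  then show "\<exists>lam. P (\<Sum>i\<in>{1..n}. dist (lam i) (lam0 i))" by (intro exI[of _ lam0]) simp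
qed

lemma tendsto_component_near_tuple:
  assumes "i \<in> {1..n}"
  shows "((\<lambda>lam. lam i) \<longlongrightarrow> lam0 i) (near_tuple n lam0)"
proof (rule tendstoI)
  fix e :: real assume "e > 0"
  have "eventually (\<lambda>lam. dist (\<Sum>i\<in>{1..n}. dist (lam i) (lam0 i)) 0 < e) (near_tuple n lam0)"
    unfolding near_tuple_def using filterlim_filtercomap \<open>e > 0\<close> by (rule tendstoD)
  then show "eventually (\<lambda>lam. dist (lam i) (lam0 i) < e) (near_tuple n lam0)"
  proof (rule eventually_mono)
    fix lam assume "dist (\<Sum>i\<in>{1..n}. dist (lam i) (lam0 i)) 0 < e"
    moreover have "dist (lam i) (lam0 i) \<le> (\<Sum>i\<in>{1..n}. dist (lam i) (lam0 i))"
      using assms by (intro member_le_sum) auto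
    ultimately show "dist (lam i) (lam0 i) < e" by (simp add: sum_nonneg)
  qed
qed

lemma eventually_near_tuple_imp_delta:
  assumes "eventually P (near_tuple n lam0)"
  obtains \<delta> where "\<delta> > 0" "\<And>lam. \<forall>i\<in>{1..n}. dist (lam i) (lam0 i) < \<delta> \<Longrightarrow> P lam"
proof -
  obtain S where S: "open S" "0 \<in> S" "\<And>lam. (\<Sum>i\<in>{1..n}. dist (lam i) (lam0 i)) \<in> S \<Longrightarrow> P lam"
    using assms unfolding near_tuple_def eventually_filtercomap_nhds by blast
  obtain e where e: "e > 0" "ball 0 e \<subseteq> S" using S(1,2) open_contains_ball by blast
  show ?thesis
  proof (rule that[of "e / (n + 1)"])
    fix lam assume lam: "\<forall>i\<in>{1..n}. dist (lam i) (lam0 i) < e / (n + 1)"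
    have "(\<Sum>i\<in>{1..n}. dist (lam i) (lam0 i)) \<le> (\<Sum>i\<in>{1..n}. e / (n + 1))"
      using lam by (intro sum_mono less_imp_le) auto
    also have "\<dots> < e" using e by (simp add: field_simps)
    finally have "(\<Sum>i\<in>{1..n}. dist (lam i) (lam0 i)) \<in> ball 0 e" by (simp add: sum_nonneg)
    with e S(3) show "P lam" by blast
  qed (use e in simp)
qed

lemma eventually_near_tuple_norm_le:
  assumes "\<forall>i\<in>{1..n}. norm (lam0 i) < r"
  shows "eventually (\<lambda>lam. \<forall>i\<in>{1..n}. norm (lam i) \<le> r) (near_tuple n lam0)"
proof (rule eventually_ball_finite[OF finite_atLeastAtMost], rule ballI)
  fix i assume i: "i \<in> {1..n}"
  have "eventually (\<lambda>lam. dist (lam i) (lam0 i) < r - norm (lam0 i)) (near_tuple n lam0)"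
    using tendstoD[OF tendsto_component_near_tuple[OF i]] assms i by simp
  then show "eventually (\<lambda>lam. norm (lam i) \<le> r) (near_tuple n lam0)"
  proof (rule eventually_mono)
    fix lam :: "nat \<Rightarrow> complex" assume "dist (lam i) (lam0 i) < r - norm (lam0 i)"
    moreover have "norm (lam i) \<le> norm (lam0 i) + dist (lam i) (lam0 i)"
      using norm_triangle_sub[of "lam i" "lam0 i"] by (simp add: dist_norm)
    ultimately show "norm (lam i) \<le> r" by simp
  qed
qed

text \<open>Tannery's theorem: every term tends to \<open>0\<close> by continuity of the coefficients, and
  \<open>2 K (R / \<rho>)\<^sup>m\<close> is a common majorant for all \<open>lam\<close> near \<open>lam0\<close>.\<close>
lemma tendsto_weighted_Pnjm_diff:
  assumes j: "j \<in> {1..n}" and lam0: "\<forall>i\<in>{1..n}. norm (lam0 i) < r"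
    and radii: "0 \<le> r" "r < R" "R < \<rho>"
  shows "eventually (\<lambda>lam. summable (\<lambda>m. norm (Pnjm n j m lam - Pnjm n j m lam0) / \<rho> ^ m)) (near_tuple n lam0)"
    and "((\<lambda>lam. \<Sum>m. norm (Pnjm n j m lam - Pnjm n j m lam0) / \<rho> ^ m) \<longlongrightarrow> 0) (near_tuple n lam0)"
proof -
  obtain K where K: "\<And>lam m i. \<forall>i\<in>{1..n}. norm (lam i) \<le> r \<Longrightarrow> norm (coeff (xpow_rem n lam m) i) \<le> K * R ^ m"
    using norm_coeff_xpow_rem_le[OF radii(1,2), of n] by metis
  define D where "D m lam = norm (Pnjm n j m lam - Pnjm n j m lam0) / \<rho> ^ m" for m lam
  have D_nonneg: "0 \<le> D m lam" for m lam using radii by (simp add: D_def)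
  have major: "norm (D m lam) \<le> 2 * K * (R / \<rho>) ^ m" if "\<forall>i\<in>{1..n}. norm (lam i) \<le> r" for m lam
  proof -
    have "norm (Pnjm n j m lam - Pnjm n j m lam0) \<le> K * R ^ m + K * R ^ m"
      unfolding Pnjm_eq_coeff_xpow_rem[OF j] using lam0
      by (intro norm_triangle_le_diff add_mono K) (use that in \<open>auto intro: less_imp_le\<close>)
    then show ?thesis
      using radii by (simp add: D_def power_divide divide_right_mono)
  qed
  have "eventually (\<lambda>lam. summable (\<lambda>m. norm (D m lam))) (near_tuple n lam0) \<and>
        summable (\<lambda>m. norm (0::real)) \<and> ((\<lambda>lam. \<Sum>m. D m lam) \<longlongrightarrow> (\<Sum>m. 0)) (near_tuple n lam0)"
  proof (rule tannerys_theorem)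
    show "((\<lambda>lam. D m lam) \<longlongrightarrow> 0) (near_tuple n lam0)" for m
      unfolding D_def Pnjm_eq_coeff_xpow_rem[OF j] using tendsto_component_near_tuple radii
      by (auto intro!: tendsto_eq_intros tendsto_coeff_xpow_rem)
    show "eventually (\<lambda>(m, lam). norm (D m lam) \<le> 2 * K * (R / \<rho>) ^ m) (at_top \<times>\<^sub>F near_tuple n lam0)"
      using eventually_prodI[OF always_eventually eventually_near_tuple_norm_le[OF lam0], of "\<lambda>_. True"]
      by (rule eventually_mono) (use major in auto)
    show "summable (\<lambda>m. 2 * K * (R / \<rho>) ^ m)"
      using radii by (intro summable_mult summable_geometric) simp
  qed (rule near_tuple_neq_bot)
  then show "eventually (\<lambda>lam. summable (\<lambda>m. norm (Pnjm n j m lam - Pnjm n j m lam0) / \<rho> ^ m)) (near_tuple n lam0)"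
    and "((\<lambda>lam. \<Sum>m. norm (Pnjm n j m lam - Pnjm n j m lam0) / \<rho> ^ m) \<longlongrightarrow> 0) (near_tuple n lam0)"
    by (simp_all add: D_nonneg D_def[symmetric])
qed

context composition
begin

lemma norm_phi_diff_le:
  assumes lam: "\<forall>i\<in>{1..n}. lam i \<in> ball 0 (gam k xi)" and lam0: "\<forall>i\<in>{1..n}. lam0 i \<in> ball 0 (gam k xi)"
    and j: "j \<in> {1..n}" and \<rho>: "0 < \<rho>" "\<rho> < gam k xi"
    and summable: "summable (\<lambda>m. norm (Pnjm n j m lam - Pnjm n j m lam0) / \<rho> ^ m)"
    and a: "a \<in> Alg k" "normA k a \<le> 1"
  shows "norm (phi k xi n j lam a - phi k xi n j lam0 a) \<le> (\<Sum>m. norm (Pnjm n j m lam - Pnjm n j m lam0) / \<rho> ^ m)"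
proof -
  have "phi k xi n j lam a - phi k xi n j lam0 a
      = (\<Sum>m. Pnjm n j m lam * alpha k xi a m - Pnjm n j m lam0 * alpha k xi a m)"
    unfolding phi_def
    by (rule suminf_diff) (use lam lam0 j a in \<open>auto intro: summable_phi_series\<close>)
  also have "\<dots> = (\<Sum>m. (Pnjm n j m lam - Pnjm n j m lam0) * alpha k xi a m)"
    by (simp add: left_diff_distrib)
  also have "norm \<dots> \<le> (\<Sum>m. norm (Pnjm n j m lam - Pnjm n j m lam0) / \<rho> ^ m)"
  proof (rule norm_suminf_le[OF _ summable])
    fix m
    have "norm (alpha k xi a m) \<le> 1 / \<rho> ^ m"
      using norm_alpha_le[OF a(1) \<rho>, of m] a(2) \<rho> by (simp add: divide_right_mono order.trans)
    then show "norm ((Pnjm n j m lam - Pnjm n j m lam0) * alpha k xi a m) \<le> norm (Pnjm n j m lam - Pnjm n j m lam0) / \<rho> ^ m"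
      unfolding norm_mult by (metis mult_left_mono norm_ge_zero times_divide_eq_right mult.right_neutral)
  qed
  finally show ?thesis .
qed

lemma phi_continuous_in_lam:
  assumes lam0: "\<forall>i\<in>{1..n}. lam0 i \<in> ball 0 (gam k xi)" and j: "j \<in> {1..n}" and e: "\<epsilon> > 0"
  obtains \<delta> where "\<delta> > 0" "\<And>lam. \<forall>i\<in>{1..n}. lam i \<in> ball 0 (gam k xi) \<Longrightarrow>
      \<forall>i\<in>{1..n}. dist (lam i) (lam0 i) < \<delta> \<Longrightarrow> dnorm k (\<lambda>a. phi k xi n j lam a - phi k xi n j lam0 a) < \<epsilon>"
proof -
  obtain r0 R \<rho> where c: "0 \<le> r0" "r0 < R" "R < \<rho>" "\<rho> < gam k xi" "\<forall>i\<in>{1..n}. norm (lam0 i) \<le> r0"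
    using obtain_radii[OF lam0] .
  define D where "D m lam = norm (Pnjm n j m lam - Pnjm n j m lam0) / \<rho> ^ m" for m lam
  have r: "\<forall>i\<in>{1..n}. norm (lam0 i) < (r0 + R) / 2" "0 \<le> (r0 + R) / 2" "(r0 + R) / 2 < R"
    using c by force+
  have "eventually (\<lambda>lam. summable (\<lambda>m. D m lam)) (near_tuple n lam0)"
    and "((\<lambda>lam. \<Sum>m. D m lam) \<longlongrightarrow> 0) (near_tuple n lam0)"
    unfolding D_def using tendsto_weighted_Pnjm_diff[OF j r c(3)] by blast+
  then have "eventually (\<lambda>lam. summable (\<lambda>m. D m lam) \<and> (\<Sum>m. D m lam) < \<epsilon>) (near_tuple n lam0)"
    using e by (auto intro: eventually_conj dest: order_tendstoD(2))
  then obtain \<delta> where "\<delta> > 0"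
    and \<delta>: "\<And>lam. \<forall>i\<in>{1..n}. dist (lam i) (lam0 i) < \<delta> \<Longrightarrow> summable (\<lambda>m. D m lam) \<and> (\<Sum>m. D m lam) < \<epsilon>"
    by (rule eventually_near_tuple_imp_delta) auto
  show ?thesis
  proof (rule that[OF \<open>\<delta> > 0\<close>])
    fix lam assume lam: "\<forall>i\<in>{1..n}. lam i \<in> ball 0 (gam k xi)" and close: "\<forall>i\<in>{1..n}. dist (lam i) (lam0 i) < \<delta>"
    have "dnorm k (\<lambda>a. phi k xi n j lam a - phi k xi n j lam0 a) \<le> (\<Sum>m. D m lam)"
      using \<delta>[OF close] c unfolding D_def by (intro dnorm_le norm_phi_diff_le[OF lam lam0 j]) auto
    also have "\<dots> < \<epsilon>" using \<delta>[OF close] by simp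
    finally show "dnorm k (\<lambda>a. phi k xi n j lam a - phi k xi n j lam0 a) < \<epsilon>" .
  qed
qed

end

theorem lemma4p4:
  fixes k n :: nat and xi :: "nat \<Rightarrow> complex poly"
  assumes "k \<ge> 1" and "\<forall>j\<in>{1..k}. xi j \<in> P0" and "xi 1 = [:0, 1:]"
  shows "(\<forall>lam. (\<forall>i\<in>{1..n}. lam i \<in> ball 0 (gam k xi)) \<longrightarrow>
            (\<forall>j\<in>{1..n}.
               (\<forall>a\<in>Alg k. summable (\<lambda>m. Pnjm n j m lam * alpha k xi a m))
             \<and> (\<forall>a\<in>Alg k. \<forall>b\<in>Alg k.
                  phi k xi n j lam (\<lambda>x. a x + b x) = phi k xi n j lam a + phi k xi n j lam b)
             \<and> (\<forall>c. \<forall>a\<in>Alg k. phi k xi n j lam (\<lambda>x. c * a x) = c * phi k xi n j lam a)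
             \<and> (\<forall>a\<in>Alg k. \<forall>\<epsilon>>0. \<exists>\<delta>>0. \<forall>b\<in>Alg k.
                  normA k (\<lambda>x. b x - a x) < \<delta> \<longrightarrow>
                  norm (phi k xi n j lam b - phi k xi n j lam a) < \<epsilon>)
             \<and> (\<forall>r\<in>{1..n}. phi k xi n j lam (u1pow (r - 1)) = (if j = r then 1 else 0)))
          \<and> Iideal k xi (q_lam n lam) = {a \<in> Alg k. \<forall>j\<in>{1..n}. phi k xi n j lam a = 0})
       \<and> (\<forall>j\<in>{1..n}. \<forall>lam0. (\<forall>i\<in>{1..n}. lam0 i \<in> ball 0 (gam k xi)) \<longrightarrow>
            (\<forall>\<epsilon>>0. \<exists>\<delta>>0. \<forall>lam. (\<forall>i\<in>{1..n}. lam i \<in> ball 0 (gam k xi)) \<and>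
                 (\<forall>i\<in>{1..n}. dist (lam i) (lam0 i) < \<delta>) \<longrightarrow>
                 dnorm k (\<lambda>a. phi k xi n j lam a - phi k xi n j lam0 a) < \<epsilon>))"
proof -
  interpret composition k xi
    using assms by unfold_locales auto
  have continuous_in_a: "\<exists>\<delta>>0. \<forall>b\<in>Alg k. normA k (\<lambda>x. b x - a x) < \<delta> \<longrightarrow>
                                  norm (phi k xi n j lam b - phi k xi n j lam a) < \<epsilon>"
    if "\<forall>i\<in>{1..n}. lam i \<in> ball 0 (gam k xi)" "j \<in> {1..n}" "a \<in> Alg k" "\<epsilon> > 0" for lam j a \<epsilon>
    using phi_continuous[OF that] by metis
  have continuous_in_lam: "\<exists>\<delta>>0. \<forall>lam. (\<forall>i\<in>{1..n}. lam i \<in> ball 0 (gam k xi)) \<and>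
           (\<forall>i\<in>{1..n}. dist (lam i) (lam0 i) < \<delta>) \<longrightarrow>
           dnorm k (\<lambda>a. phi k xi n j lam a - phi k xi n j lam0 a) < \<epsilon>"
    if "\<forall>i\<in>{1..n}. lam0 i \<in> ball 0 (gam k xi)" "j \<in> {1..n}" "\<epsilon> > 0" for lam0 j \<epsilon>
    using phi_continuous_in_lam[OF that] by metis
  show ?thesis
    using summable_phi_series phi_add phi_cmult phi_u1pow Iideal_q_lam_eq continuous_in_a continuous_in_lam
    by auto
qed

end
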